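(* Let $X=\{\ell,r,s\}$ be a te-set such that $\{\ell,r\}$ is a tu-set and $|\operatorname{supp}(z)|\geq2$ for all $z\in X$. Let $j\in\operatorname{supp}(r)\cap\operatorname{supp}(\ell)$, and let $r',s'$ be the rows of $X/(\ell,j)$ corresponding to $r$ and $s$ (where $(\ell,j)$ denotes the pivot at the row $\ell$ and column $j$). If $\operatorname{supp}(r')=\operatorname{supp}(s')$, then either $\{r,s\}$ or $\{\ell,r,s\}$ is a te-lace.
   Context: A set of vectors is identified with the matrix whose rows are these vectors; $\operatorname{supp}(x)$ is the set of nonzero coordinates of $x$. A matrix is totally equimodular if every set of linearly independent rows forms a matrix of full row rank whose nonzero maximal minors all have the same absolute value, and totally unimodular if all its square submatrices have determinant in $\{0,\pm1\}$. A linearly independent set of $\{0,\pm1\}$-vectors is a te-set if its matrix is totally equimodular, a tu-set if its matrix is totally unimodular, and a te-lace if it is a te-set, not a tu-set, and all its proper subsets are tu-sets. For a position $(i,j)$ with $A_i^j\neq0$, $A/(i,j)$ is obtained from $A$ by dividing row $i$ by $A_i^j$ and adding suitable multiples of this row to the other rows so that column $j$ becomes the $i$-th unit vector. *)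

theory Defs
  imports "HOL-Analysis.Analysis"
begin

text \<open>A finite set of vectors is identified with the matrix whose rows are its elements
  (row order only affects signs of minors, which are irrelevant below).\<close>

definition supp :: "real^'n \<Rightarrow> 'n set" where
  "supp x = {i. x $ i \<noteq> 0}"

definition pm01 :: "real^'n \<Rightarrow> bool" where
  "pm01 x \<longleftrightarrow> (\<forall>i. x $ i \<in> {-1, 0, 1})"

definition det_fun :: "nat \<Rightarrow> (nat \<Rightarrow> nat \<Rightarrow> real) \<Rightarrow> real" where
  "det_fun k M = (\<Sum>p | p permutes {..<k}. of_int (sign p) * (\<Prod>i<k. M i (p i)))"

definition minor :: "(real^'n) list \<Rightarrow> 'n list \<Rightarrow> real" where
  "minor rs cs = det_fun (length rs) (\<lambda>i k. (rs ! i) $ (cs ! k))"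

definition totally_unimodular :: "(real^'n) set \<Rightarrow> bool" where
  "totally_unimodular X \<longleftrightarrow>
     (\<forall>rs cs. distinct rs \<and> set rs \<subseteq> X \<and> distinct cs \<and> length cs = length rs
        \<longrightarrow> minor rs cs \<in> {-1, 0, 1})"

definition totally_equimodular :: "(real^'n) set \<Rightarrow> bool" where
  "totally_equimodular X \<longleftrightarrow>
     (\<forall>Y. Y \<subseteq> X \<and> independent Y \<longrightarrow>
        (\<forall>rs cs rs' cs'.
           distinct rs \<and> set rs = Y \<and> distinct cs \<and> length cs = length rs \<and>
           distinct rs' \<and> set rs' = Y \<and> distinct cs' \<and> length cs' = length rs' \<and>
           minor rs cs \<noteq> 0 \<and> minor rs' cs' \<noteq> 0
           \<longrightarrow> \<bar>minor rs cs\<bar> = \<bar>minor rs' cs'\<bar>))"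

definition te_set :: "(real^'n) set \<Rightarrow> bool" where
  "te_set X \<longleftrightarrow> independent X \<and> (\<forall>x\<in>X. pm01 x) \<and> totally_equimodular X"

definition tu_set :: "(real^'n) set \<Rightarrow> bool" where
  "tu_set X \<longleftrightarrow> independent X \<and> (\<forall>x\<in>X. pm01 x) \<and> totally_unimodular X"

definition te_lace :: "(real^'n) set \<Rightarrow> bool" where
  "te_lace X \<longleftrightarrow> te_set X \<and> \<not> tu_set X \<and> (\<forall>Y. Y \<subset> X \<longrightarrow> tu_set Y)"

text \<open>Row x after pivoting at (l, j): l_j is nonzero; the pivot row l is divided by l_j
  and x_j/l_j times l is subtracted from x so that column j becomes a unit vector.\<close>
definition pivot_row :: "real^'n \<Rightarrow> 'n \<Rightarrow> real^'n \<Rightarrow> real^'n" where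
  "pivot_row l j x = x - (x $ j / l $ j) *\<^sub>R l"

end

theory Submission
  imports Defs
begin

text \<open>Pivot at \<open>(l, j)\<close> with \<open>l\<^sub>j = \<plusminus>1\<close> and write \<open>r'\<close>, \<open>s'\<close> for the pivoted rows.
  Every minor through column \<open>j\<close> factors through the pivoted rows:
  \<open>[l, x]\<close> on columns \<open>j, a\<close> gives \<open>l\<^sub>j x'\<^sub>a\<close>, and \<open>[l, r, s]\<close> on \<open>j, a, b\<close> gives
  \<open>l\<^sub>j (r'\<^sub>a s'\<^sub>b - r'\<^sub>b s'\<^sub>a)\<close>. As \<open>{l, r}\<close> is TU, \<open>r'\<close> is a \<open>{0, \<plusminus>1}\<close>-vector, and by
  independence \<open>s'\<close> is not a multiple of \<open>r'\<close>.
  If \<open>{l, r, s}\<close> were TU, \<open>s'\<close> would be a \<open>{0, \<plusminus>1}\<close>-vector with the support of \<open>r'\<close>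
  agreeing with \<open>r'\<close> in sign at one column and disagreeing at another, which yields a
  3x3 minor \<open>\<plusminus>2\<close>. So \<open>{l, r, s}\<close> is not TU, and it is a lace unless one of its pairs is
  not TU. If \<open>{r, s}\<close> is not TU it is the lace. If \<open>{r, s}\<close> is TU but \<open>{l, s}\<close> is not,
  total equimodularity forces all entries of \<open>s'\<close> into \<open>{0, \<plusminus>2}\<close>, and then the 2x2
  minors of \<open>[r, s]\<close> through column \<open>j\<close> force \<open>s' = 2 r\<^sub>j s\<^sub>j r'\<close>, a contradiction.\<close>

lemma det_fun_0: "det_fun 0 M = 1"
  by (simp add: det_fun_def)

lemma det_fun_1: "det_fun 1 M = M 0 0"
proof -
  have "{..<1::nat} = {0}" by auto
  then show ?thesis by (simp add: det_fun_def permutes_sing sign_id)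
qed

lemma det_fun_2: "det_fun 2 M = M 0 0 * M 1 1 - M 0 1 * M 1 0"
proof -
  have lt2: "{..<2::nat} = insert 0 {1}" by auto
  have "finite {1::nat}" "0 \<notin> {1::nat}" by auto
  note insert = sum_over_permutations_insert[OF this]
  show ?thesis
    unfolding det_fun_def lt2 insert permutes_sing
    by (simp add: sign_swap_id sign_id swap_id_eq lt2)
qed

lemma det_fun_3: "det_fun 3 M =
    M 0 0 * M 1 1 * M 2 2 + M 0 1 * M 1 2 * M 2 0 + M 0 2 * M 1 0 * M 2 1
  - M 0 0 * M 1 2 * M 2 1 - M 0 1 * M 1 0 * M 2 2 - M 0 2 * M 1 1 * M 2 0"
proof -
  have lt3: "{..<3::nat} = insert 0 (insert 1 {2})" by auto
  have "finite {1::nat, 2}" "0 \<notin> {1::nat, 2}" by auto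
  note insert1 = sum_over_permutations_insert[OF this]
  have "finite {2::nat}" "1 \<notin> {2::nat}" by auto
  note insert2 = sum_over_permutations_insert[OF this]
  show ?thesis
    unfolding det_fun_def lt3 insert1 insert2 permutes_sing
    by (simp add: sign_swap_id permutation_swap_id sign_compose sign_id swap_id_eq lt3
        algebra_simps)
qed

lemma minor_Nil: "minor [] [] = 1"
  by (simp add: minor_def det_fun_0)

lemma minor_singleton: "minor [x] [a] = x $ a"
proof -
  have "length [x] = 1" by simp
  then show ?thesis unfolding minor_def by (simp only: det_fun_1) simp
qed

lemma minor_two: "minor [x, y] [a, b] = x $ a * y $ b - x $ b * y $ a"
proof -
  have "length [x, y] = 2" by simp
  then show ?thesis unfolding minor_def by (simp only: det_fun_2) simp
qed

lemma minor_three: "minor [x, y, z] [a, b, c] =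
    x $ a * y $ b * z $ c + x $ b * y $ c * z $ a + x $ c * y $ a * z $ b
  - x $ a * y $ c * z $ b - x $ b * y $ a * z $ c - x $ c * y $ b * z $ a"
proof -
  have "length [x, y, z] = 3" by simp
  then show ?thesis unfolding minor_def by (simp only: det_fun_3) simp
qed

lemma tu_set_minor:
  assumes "tu_set X" "distinct rs" "set rs \<subseteq> X" "distinct cs" "length cs = length rs"
  shows "minor rs cs \<in> {-1, 0, 1}"
  using assms unfolding tu_set_def totally_unimodular_def by blast

lemma tu_set_subset: "tu_set X \<Longrightarrow> Y \<subseteq> X \<Longrightarrow> tu_set Y"
  unfolding tu_set_def totally_unimodular_def using independent_mono by blast

lemma totally_equimodular_subset:
  assumes "totally_equimodular X" "Y \<subseteq> X"
  shows "totally_equimodular Y"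
  using assms(1) unfolding totally_equimodular_def
  by (rule all_forward) (use assms(2) in blast)

lemma te_set_subset: "te_set X \<Longrightarrow> Y \<subseteq> X \<Longrightarrow> te_set Y"
  unfolding te_set_def using independent_mono totally_equimodular_subset by blast

lemma te_set_minor_abs_eq:
  assumes "te_set X" "Y \<subseteq> X"
    and "distinct rs" "set rs = Y" "distinct cs" "length cs = length rs" "minor rs cs \<noteq> 0"
    and "distinct rs'" "set rs' = Y" "distinct cs'" "length cs' = length rs'" "minor rs' cs' \<noteq> 0"
  shows "\<bar>minor rs cs\<bar> = \<bar>minor rs' cs'\<bar>"
proof -
  have "Y \<subseteq> X \<and> independent Y" "totally_equimodular X"
    using assms(1,2) independent_mono unfolding te_set_def by auto
  then show ?thesis
    using assms(3-) unfolding totally_equimodular_def by (elim allE impE) auto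
qed

lemma minor_subset_singleton:
  assumes "distinct rs" "set rs \<subseteq> {x}" "pm01 x" "length cs = length rs"
  shows "minor rs cs \<in> {-1, 0, 1}"
proof -
  have "length rs \<le> 1"
    using distinct_card[OF assms(1)] card_mono[OF _ assms(2)] by auto
  then consider "rs = []" | "rs = [x]"
    using assms(2) by (cases rs) auto
  then show ?thesis
  proof cases
    case 1
    then show ?thesis using assms(4) by (simp add: minor_Nil)
  next
    case 2
    then obtain c where "cs = [c]" using assms(4) by (cases cs) auto
    then show ?thesis using 2 assms(3) by (simp add: minor_singleton pm01_def)
  qed
qed

lemma tu_set_singleton: "independent {x} \<Longrightarrow> pm01 x \<Longrightarrow> tu_set {x}"
  unfolding tu_set_def totally_unimodular_def using minor_subset_singleton by auto

lemma not_tu_set_pair_obtains_minor: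
  assumes "independent {x, y}" "pm01 x" "pm01 y" "\<not> tu_set {x, y}"
  obtains rs cs where "distinct rs" "set rs = {x, y}" "distinct cs" "length cs = length rs"
    "minor rs cs \<notin> {-1, 0, 1}"
proof -
  obtain rs cs where rc: "distinct rs" "set rs \<subseteq> {x, y}" "distinct cs"
      "length cs = length rs" "minor rs cs \<notin> {-1, 0, 1}"
    using assms unfolding tu_set_def totally_unimodular_def by blast
  have "set rs = {x, y}"
  proof (rule ccontr)
    assume "set rs \<noteq> {x, y}"
    then have "set rs \<subseteq> {x} \<or> set rs \<subseteq> {y}" using rc(2) by auto
    then show False using minor_subset_singleton[OF rc(1) _ _ rc(4)] assms(2,3) rc(5) by auto
  qed
  then show thesis using that rc by blast
qed

lemma te_lace_pairI:
  assumes "te_set {x, y}" "\<not> tu_set {x, y}"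
  shows "te_lace {x, y}"
  unfolding te_lace_def
proof (intro conjI allI impI)
  fix Y assume "Y \<subset> {x, y}"
  then have "Y \<subseteq> {x} \<or> Y \<subseteq> {y}" by blast
  moreover have "tu_set {x}" "tu_set {y}"
  proof -
    have "independent {x, y}" "pm01 x" "pm01 y" using assms(1) unfolding te_set_def by auto
    then show "tu_set {x}" "tu_set {y}"
      by (metis independent_mono insert_commute subset_insertI tu_set_singleton)+
  qed
  ultimately show "tu_set Y" using tu_set_subset by blast
qed (use assms in auto)

lemma te_lace_tripleI:
  assumes "te_set {x, y, z}" "\<not> tu_set {x, y, z}"
    and "tu_set {x, y}" "tu_set {x, z}" "tu_set {y, z}"
  shows "te_lace {x, y, z}"
  unfolding te_lace_def
proof (intro conjI allI impI)
  fix Y assume "Y \<subset> {x, y, z}"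
  then have "Y \<subseteq> {x, y} \<or> Y \<subseteq> {x, z} \<or> Y \<subseteq> {y, z}" by blast
  then show "tu_set Y" using assms(3-) tu_set_subset by blast
qed (use assms in auto)

lemma sign_vectors_same_supp_obtain_mixed_signs:
  fixes x y :: "real^'n"
  assumes "\<forall>a. x $ a \<in> {-1, 0, 1}" "\<forall>a. y $ a \<in> {-1, 0, 1}" "supp x = supp y"
    and "y \<noteq> x" "y \<noteq> - x"
  obtains a b where "x $ a * y $ a = 1" "x $ b * y $ b = -1"
proof -
  have zero_iff: "x $ a = 0 \<longleftrightarrow> y $ a = 0" for a
    using assms(3) unfolding supp_def by blast
  obtain a where "y $ a \<noteq> - x $ a" using assms(5) by (auto simp: vec_eq_iff)
  then have "x $ a * y $ a = 1"
    using assms(1,2)[rule_format, of a] zero_iff[of a] by auto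
  moreover obtain b where "y $ b \<noteq> x $ b" using assms(4) by (auto simp: vec_eq_iff)
  then have "x $ b * y $ b = -1"
    using assms(1,2)[rule_format, of b] zero_iff[of b] by auto
  ultimately show thesis by (rule that)
qed

lemma pivot_row_component: "pivot_row l j x $ a = x $ a - x $ j / l $ j * l $ a"
  by (simp add: pivot_row_def)

lemma pivot_row_pivot_column: "l $ j \<noteq> 0 \<Longrightarrow> pivot_row l j x $ j = 0"
  by (simp add: pivot_row_component)

lemma minor_pivot_two:
  "l $ j \<noteq> 0 \<Longrightarrow> minor [l, x] [j, a] = l $ j * pivot_row l j x $ a"
  by (simp add: minor_two pivot_row_component field_simps)

lemma minor_two_via_pivot:
  "l $ j \<noteq> 0 \<Longrightarrow>
    minor [x, y] [j, a] = x $ j * pivot_row l j y $ a - y $ j * pivot_row l j x $ a"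
  by (simp add: minor_two pivot_row_component field_simps)

lemma minor_pivot_three:
  "l $ j \<noteq> 0 \<Longrightarrow> minor [l, x, y] [j, a, b] =
    l $ j * (pivot_row l j x $ a * pivot_row l j y $ b - pivot_row l j x $ b * pivot_row l j y $ a)"
  by (simp add: minor_three pivot_row_component field_simps)

lemma pivot_row_eq_scale_imp_span:
  assumes "l $ j \<noteq> 0" "pivot_row l j y = c *\<^sub>R pivot_row l j x"
  shows "y \<in> span {l, x}"
proof -
  have "y = c *\<^sub>R x + (y $ j / l $ j - c * (x $ j / l $ j)) *\<^sub>R l"
    using assms(2) unfolding pivot_row_def by (simp add: algebra_simps)
  also have "\<dots> \<in> span {l, x}"
    by (intro span_add span_scale span_base) auto
  finally show ?thesis .
qed

lemma pivot_row_not_parallel: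
  assumes "independent {l, x, y}" "distinct [l, x, y]" "l $ j \<noteq> 0"
  shows "pivot_row l j y \<noteq> c *\<^sub>R pivot_row l j x"
proof
  assume "pivot_row l j y = c *\<^sub>R pivot_row l j x"
  then have "y \<in> span ({l, x, y} - {y})"
    using pivot_row_eq_scale_imp_span[OF assms(3)] assms(2) by (simp add: insert_Diff_if)
  then show False using assms(1) unfolding dependent_def by blast
qed

lemma pivot_row_entries_if_tu_set:
  assumes "tu_set {l, x}" "l \<noteq> x" "l $ j \<in> {-1, 1}"
  shows "pivot_row l j x $ a \<in> {-1, 0, 1}"
proof (cases "a = j")
  case True
  have "l $ j \<noteq> 0" using assms(3) by auto
  with True show ?thesis by (simp add: pivot_row_pivot_column)
next
  case False
  then have "minor [l, x] [j, a] \<in> {-1, 0, 1}"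
    using tu_set_minor[OF assms(1), of "[l, x]" "[j, a]"] assms(2) by auto
  then show ?thesis using assms(3) by (auto simp: minor_pivot_two)
qed

lemma pivot_row_entries_pm01:
  assumes "pm01 l" "pm01 x" "l $ j \<in> {-1, 1}"
  shows "pivot_row l j x $ a \<in> {-2, -1, 0, 1, 2}"
proof -
  have "l $ a \<in> {-1, 0, 1}" "x $ a \<in> {-1, 0, 1}" "x $ j \<in> {-1, 0, 1}"
    using assms(1,2) unfolding pm01_def by blast+
  then show ?thesis using assms(3) unfolding pivot_row_component by auto
qed

text \<open>Total equimodularity compares every nonzero 2x2 minor through column \<open>j\<close> with a
  failing minor, whose absolute value is not 1.\<close>

lemma pivot_row_entries_if_not_tu_set:
  assumes "te_set {l, x}" "\<not> tu_set {l, x}" "l \<noteq> x" "l $ j \<in> {-1, 1}"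
  shows "pivot_row l j x $ a \<in> {-2, 0, 2}"
proof (cases "a = j \<or> pivot_row l j x $ a = 0")
  case True
  have "l $ j \<noteq> 0" using assms(4) by auto
  with True show ?thesis by (auto simp: pivot_row_pivot_column)
next
  case False
  have pm: "pm01 l" "pm01 x" and ind: "independent {l, x}"
    using assms(1) unfolding te_set_def by auto
  obtain rs cs where rc: "distinct rs" "set rs = {l, x}" "distinct cs"
      "length cs = length rs" "minor rs cs \<notin> {-1, 0, 1}"
    using not_tu_set_pair_obtains_minor[OF ind pm assms(2)] by blast
  have lj: "\<bar>l $ j\<bar> = 1" using assms(4) by auto
  have "minor [l, x] [j, a] \<noteq> 0"
    using False lj by (auto simp: minor_pivot_two)
  then have "\<bar>minor rs cs\<bar> = \<bar>minor [l, x] [j, a]\<bar>"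
    using rc(5) False assms(3) by (intro te_set_minor_abs_eq[OF assms(1) order_refl rc(1-4)]) auto
  moreover have "\<bar>minor rs cs\<bar> \<noteq> 1" using rc(5) by (auto simp: abs_if)
  ultimately have "\<bar>pivot_row l j x $ a\<bar> \<noteq> 1"
    using lj by (simp add: minor_pivot_two abs_mult)
  then show ?thesis
    using pivot_row_entries_pm01[OF pm assms(4), of a] by auto
qed

lemma not_tu_set_if_pivot_supp_eq:
  assumes "distinct [l, r, s]" "independent {l, r, s}" "l $ j \<in> {-1, 1}"
    and "supp (pivot_row l j r) = supp (pivot_row l j s)"
  shows "\<not> tu_set {l, r, s}"
proof
  assume tu: "tu_set {l, r, s}"
  define r' s' where "r' = pivot_row l j r" and "s' = pivot_row l j s"
  have lj: "l $ j \<noteq> 0" using assms(3) by auto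
  have r'_entries: "\<forall>a. r' $ a \<in> {-1, 0, 1}" and s'_entries: "\<forall>a. s' $ a \<in> {-1, 0, 1}"
    using pivot_row_entries_if_tu_set[OF tu_set_subset[OF tu] _ assms(3)] assms(1)
    unfolding r'_def s'_def by auto
  have "s' \<noteq> 1 *\<^sub>R r'" "s' \<noteq> (-1) *\<^sub>R r'"
    unfolding r'_def s'_def using pivot_row_not_parallel[OF assms(2,1) lj] by blast+
  then obtain a b where ab: "r' $ a * s' $ a = 1" "r' $ b * s' $ b = -1"
    using sign_vectors_same_supp_obtain_mixed_signs[OF r'_entries s'_entries] assms(4)
    unfolding r'_def s'_def by auto
  have "a \<noteq> j" "b \<noteq> j" "a \<noteq> b"
    using ab pivot_row_pivot_column[OF lj] unfolding r'_def by auto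
  then have "minor [l, r, s] [j, a, b] \<in> {-1, 0, 1}"
    using tu_set_minor[OF tu, of "[l, r, s]" "[j, a, b]"] assms(1) by auto
  moreover have "minor [l, r, s] [j, a, b] \<in> {-2, 2}"
  proof -
    have "r' $ a \<in> {-1, 1}" "s' $ a = r' $ a" "r' $ b \<in> {-1, 1}" "s' $ b = - r' $ b"
      using ab r'_entries[rule_format, of a] s'_entries[rule_format, of a]
        r'_entries[rule_format, of b] s'_entries[rule_format, of b] by auto
    then show ?thesis
      using minor_pivot_three[OF lj, of r s a b] assms(3) unfolding r'_def s'_def by auto
  qed
  ultimately show False by auto
qed

lemma tu_set_pivot_partner:
  assumes "distinct [l, r, s]" "te_set {l, r, s}" "tu_set {l, r}" "tu_set {r, s}"
    and "l $ j \<in> {-1, 1}" "r $ j \<in> {-1, 1}"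
    and "supp (pivot_row l j r) = supp (pivot_row l j s)"
  shows "tu_set {l, s}"
proof (rule ccontr)
  assume not_tu: "\<not> tu_set {l, s}"
  define r' s' where "r' = pivot_row l j r" and "s' = pivot_row l j s"
  have lj: "l $ j \<noteq> 0" using assms(5) by auto
  have ind: "independent {l, r, s}" and pm: "pm01 s"
    using assms(2) unfolding te_set_def by auto
  have "s' $ a = (2 * r $ j * s $ j) * r' $ a" for a
  proof (cases "a = j")
    case True
    then show ?thesis using pivot_row_pivot_column[OF lj] unfolding r'_def s'_def by simp
  next
    case False
    have "minor [r, s] [j, a] \<in> {-1, 0, 1}"
      using tu_set_minor[OF assms(4), of "[r, s]" "[j, a]"] assms(1) False by auto
    then have "r $ j * s' $ a - s $ j * r' $ a \<in> {-1, 0, 1}"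
      using minor_two_via_pivot[OF lj, of r s a] unfolding r'_def s'_def by simp
    moreover have "r' $ a \<in> {-1, 0, 1}"
      using pivot_row_entries_if_tu_set[OF assms(3)] assms(1,5) unfolding r'_def by auto
    moreover have "s' $ a \<in> {-2, 0, 2}"
      using pivot_row_entries_if_not_tu_set[OF te_set_subset[OF assms(2)] not_tu] assms(1,5)
      unfolding s'_def by auto
    moreover have "r' $ a = 0 \<longleftrightarrow> s' $ a = 0"
      using assms(7) unfolding r'_def s'_def supp_def by blast
    moreover have "s $ j \<in> {-1, 0, 1}" using pm unfolding pm01_def by blast
    ultimately show ?thesis
      using assms(6) by (simp only: insert_iff empty_iff) (elim disjE; simp)
  qed
  then have "s' = (2 * r $ j * s $ j) *\<^sub>R r'" by (simp add: vec_eq_iff)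
  then show False
    using pivot_row_not_parallel[OF ind assms(1) lj] unfolding r'_def s'_def by blast
qed

theorem mainTheorem8:
  fixes l r s :: "real^'n" and j :: 'n
  assumes "distinct [l, r, s]"
    and "te_set {l, r, s}"
    and "tu_set {l, r}"
    and "\<forall>z\<in>{l, r, s}. card (supp z) \<ge> 2"
    and "j \<in> supp r \<inter> supp l"
    and "supp (pivot_row l j r) = supp (pivot_row l j s)"
  shows "te_lace {r, s} \<or> te_lace {l, r, s}"
proof -
  have ind: "independent {l, r, s}" and pm: "pm01 l" "pm01 r"
    using assms(2) unfolding te_set_def by auto
  have lj: "l $ j \<in> {-1, 1}" and rj: "r $ j \<in> {-1, 1}"
    using assms(5) pm unfolding supp_def pm01_def by auto
  have not_tu: "\<not> tu_set {l, r, s}"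
    using not_tu_set_if_pivot_supp_eq[OF assms(1) ind lj assms(6)] .
  show ?thesis
  proof (cases "tu_set {r, s}")
    case True
    then have "tu_set {l, s}"
      using tu_set_pivot_partner[OF assms(1-3) _ lj rj assms(6)] by blast
    then show ?thesis
      using te_lace_tripleI[OF assms(2) not_tu assms(3) _ True] by blast
  next
    case False
    then show ?thesis
      using te_lace_pairI te_set_subset[OF assms(2)] by blast
  qed
qed

end
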